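(* Let $p$ be a prime with $p\equiv 1\pmod 4$ and let $\lambda$ be an integer with $p\nmid\lambda$. Let $a(p):=\#X_\lambda^4(\mathbb F_p)-p^2-1$ be the trace of Frobenius of the Dwork K3 surface $X_\lambda^4$ over $\mathbb F_p$ (with $\lambda$ reduced modulo $p$). Then $$a(p)\equiv \sum_{j=0}^{p-1}\frac{(\tfrac14)_j(\tfrac24)_j(\tfrac34)_j}{j!^3}\,\lambda^{-4j}\pmod p,$$ i.e. $a(p)$ is congruent modulo $p$ to the truncation at $p$ of the period $\pi={}_{3}F_{2}\left(\frac14,\frac24,\frac34;1,1\,\middle|\,\frac{1}{\lambda^4}\right)=\sum_{j\ge0}\frac{(\frac14)_j(\frac24)_j(\frac34)_j}{j!^3}\lambda^{-4j}$ of the surface.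
   Context: $X_\lambda^4$ is the Dwork K3 surface in $\mathbb P^3$ defined by $x_1^4+x_2^4+x_3^4+x_4^4=4\lambda x_1x_2x_3x_4$; $\#X_\lambda^4(\mathbb F_p)$ is its number of $\mathbb F_p$-rational points. $(a)_0=1$ and $(a)_j=a(a+1)\cdots(a+j-1)$. The congruence is in $\mathbb Z_{(p)}$ (the coefficients of the truncated sum are $p$-integral). *)

theory Defs
  imports "HOL-Number_Theory.Number_Theory"
begin

definition nonzero_vecs :: "int \<Rightarrow> (int \<times> int \<times> int \<times> int) set" where
  "nonzero_vecs p = {(x1,x2,x3,x4). x1 \<in> {0..<p} \<and> x2 \<in> {0..<p} \<and> x3 \<in> {0..<p} \<and> x4 \<in> {0..<p}
      \<and> (x1,x2,x3,x4) \<noteq> (0,0,0,0)}"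

definition proj_rel :: "int \<Rightarrow> ((int \<times> int \<times> int \<times> int) \<times> (int \<times> int \<times> int \<times> int)) set" where
  "proj_rel p = {((x1,x2,x3,x4),(y1,y2,y3,y4)).
      (x1,x2,x3,x4) \<in> nonzero_vecs p \<and> (y1,y2,y3,y4) \<in> nonzero_vecs p \<and>
      (\<exists>c\<in>{1..<p}. [y1 = c*x1] (mod p) \<and> [y2 = c*x2] (mod p) \<and> [y3 = c*x3] (mod p) \<and> [y4 = c*x4] (mod p))}"

definition proj_points :: "int \<Rightarrow> (int \<times> int \<times> int \<times> int) set set" where
  "proj_points p = nonzero_vecs p // proj_rel p"

definition dwork_count :: "int \<Rightarrow> int \<Rightarrow> nat" where
  "dwork_count p lam = card {P \<in> proj_points p. \<forall>(x1,x2,x3,x4)\<in>P.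
      [x1^4 + x2^4 + x3^4 + x4^4 = 4*lam*x1*x2*x3*x4] (mod p)}"

text \<open>Congruence modulo p in Z_(p), for rationals.\<close>
definition cong_Zp :: "rat \<Rightarrow> rat \<Rightarrow> int \<Rightarrow> bool" where
  "cong_Zp a b p \<longleftrightarrow> (\<exists>r::rat. a - b = of_int p * r \<and> coprime (snd (quotient_of r)) p)"

end

theory Submission
  imports Defs
begin

text \<open>
  Write \<open>n = p - 1\<close> and \<open>F = x\<^sub>1\<^sup>4 + x\<^sub>2\<^sup>4 + x\<^sub>3\<^sup>4 + x\<^sub>4\<^sup>4 - 4\<lambda> x\<^sub>1x\<^sub>2x\<^sub>3x\<^sub>4\<close>.
  By Fermat, \<open>1 - F\<^sup>n\<close> is the indicator of \<open>F \<equiv> 0\<close> modulo \<open>p\<close> (Chevalley--Warning), so the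
  number \<open>(p - 1) #X(\<bbbF>\<^sub>p) + 1\<close> of affine zeros is congruent to \<open>-\<Sum>\<^sub>x F(x)\<^sup>n\<close>. Expanding
  \<open>F\<^sup>n\<close> and using that \<open>\<Sum>\<^sub>x x\<^sup>e\<close> is \<open>-1\<close> for positive multiples \<open>e\<close> of \<open>n\<close> and \<open>0\<close> otherwise,
  only the monomials \<open>(x\<^sub>1x\<^sub>2x\<^sub>3x\<^sub>4)\<^sup>n\<^sup>-\<^sup>4\<^sup>a (x\<^sub>1\<^sup>4)\<^sup>a\<cdot>\<cdot>\<cdot>(x\<^sub>4\<^sup>4)\<^sup>a\<close> survive, giving
  \<open>a(p) \<equiv> \<Sum>\<^sub>a (4a)!/a!\<^sup>4 (4\<lambda>)\<^sup>n\<^sup>-\<^sup>4\<^sup>a\<close>. By Fermat again \<open>(4\<lambda>)\<^sup>n\<^sup>-\<^sup>4\<^sup>a \<equiv> (4\<lambda>)\<^sup>-\<^sup>4\<^sup>a\<close>, and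
  \<open>(4a)!/(a!\<^sup>4 256\<^sup>a) = (1/4)\<^sub>a(2/4)\<^sub>a(3/4)\<^sub>a/a!\<^sup>3\<close>. The terms \<open>n/4 < j < p\<close> of the truncated
  series vanish modulo \<open>p\<close> because \<open>p\<close> divides \<open>(4j)!\<close> but not \<open>j!\<close>.
\<close>

definition p_integral :: "int \<Rightarrow> rat \<Rightarrow> bool" where
  "p_integral p r \<longleftrightarrow> coprime (snd (quotient_of r)) p"

lemma cong_Zp_iff: "cong_Zp a b p \<longleftrightarrow> (\<exists>r. p_integral p r \<and> a - b = of_int p * r)"
  by (auto simp: cong_Zp_def p_integral_def)

lemma p_integral_fraction:
  assumes "coprime b p"
  shows "p_integral p (of_int a / of_int b)"
proof (cases "b = 0")
  case True
  then show ?thesis by (simp add: p_integral_def)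
next
  case False
  obtain n d where nd: "quotient_of (of_int a / of_int b) = (n, d)" by fastforce
  have "of_int a / of_int b = (of_int n / of_int d :: rat)" "d > 0"
    using quotient_of_div[OF nd] quotient_of_denom_pos[OF nd] by auto
  then have "a * d = n * b"
    using False by (simp add: field_simps flip: of_int_mult of_int_eq_iff)
  then have "d dvd n * b" by (metis dvd_triv_right)
  with quotient_of_coprime[OF nd] have "d dvd b"
    by (metis coprime_commute coprime_dvd_mult_right_iff)
  with assms have "coprime d p" by (meson coprime_divisors dvd_refl)
  then show ?thesis by (simp add: p_integral_def nd)
qed

lemma p_integral_obtain_fraction:
  assumes "p_integral p r"
  obtains a b where "b > 0" "coprime b p" "r = of_int a / of_int b"
  using assms quotient_of_div quotient_of_denom_pos unfolding p_integral_def
  by (metis prod.collapse)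

lemma p_integral_of_int [intro]: "p_integral p (of_int a)"
  using p_integral_fraction[of 1 p a] by simp

lemma p_integral_add [intro]:
  assumes "p_integral p x" "p_integral p y"
  shows "p_integral p (x + y)"
proof -
  obtain a b c d where "b > 0" "coprime b p" "x = of_int a / of_int b"
    and "d > 0" "coprime d p" "y = of_int c / of_int d"
    using assms by (metis p_integral_obtain_fraction)
  then have "x + y = of_int (a * d + c * b) / of_int (b * d)" "coprime (b * d) p"
    by (simp_all add: field_simps)
  then show ?thesis by (metis p_integral_fraction)
qed

lemma p_integral_mult [intro]:
  assumes "p_integral p x" "p_integral p y"
  shows "p_integral p (x * y)"
proof -
  obtain a b c d where "b > 0" "coprime b p" "x = of_int a / of_int b"
    and "d > 0" "coprime d p" "y = of_int c / of_int d"
    using assms by (metis p_integral_obtain_fraction)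
  then have "x * y = of_int (a * c) / of_int (b * d)" "coprime (b * d) p"
    by simp_all
  then show ?thesis by (metis p_integral_fraction)
qed

lemma cong_Zp_of_int:
  assumes "[a = b] (mod p)"
  shows "cong_Zp (of_int a) (of_int b) p"
proof -
  obtain k where "a - b = p * k"
    using assms by (metis cong_iff_dvd_diff dvdE)
  then show ?thesis
    unfolding cong_Zp_iff by (intro exI[of _ "of_int k"]) (auto simp flip: of_int_diff of_int_mult)
qed

lemma cong_Zp_refl: "cong_Zp a a p"
  unfolding cong_Zp_iff by (intro exI[of _ 0]) (auto simp: p_integral_def)

lemma cong_Zp_trans [trans]:
  assumes "cong_Zp a b p" "cong_Zp b c p"
  shows "cong_Zp a c p"
proof -
  obtain r s where "p_integral p r" "a - b = of_int p * r" "p_integral p s" "b - c = of_int p * s"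
    using assms by (auto simp: cong_Zp_iff)
  then show ?thesis
    unfolding cong_Zp_iff by (intro exI[of _ "r + s"]) (auto simp: algebra_simps)
qed

lemma cong_Zp_add:
  assumes "cong_Zp a b p" "cong_Zp c d p"
  shows "cong_Zp (a + c) (b + d) p"
proof -
  obtain r s where "p_integral p r" "a - b = of_int p * r" "p_integral p s" "c - d = of_int p * s"
    using assms by (auto simp: cong_Zp_iff)
  then show ?thesis
    unfolding cong_Zp_iff by (intro exI[of _ "r + s"]) (auto simp: algebra_simps)
qed

lemma cong_Zp_sum:
  assumes "\<And>i. i \<in> A \<Longrightarrow> cong_Zp (f i) (g i) p"
  shows "cong_Zp (sum f A) (sum g A) p"
  using assms
  by (induction A rule: infinite_finite_induct) (auto intro: cong_Zp_add cong_Zp_refl)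

lemma cong_Zp_mult_left:
  assumes "p_integral p c" "cong_Zp a b p"
  shows "cong_Zp (c * a) (c * b) p"
proof -
  obtain r where "p_integral p r" "a - b = of_int p * r"
    using assms(2) by (auto simp: cong_Zp_iff)
  then show ?thesis
    using assms(1) unfolding cong_Zp_iff
    by (intro exI[of _ "c * r"]) (auto simp: algebra_simps)
qed

lemma cong_Zp_zero_fraction:
  assumes "p dvd a" "coprime b p"
  shows "cong_Zp 0 (of_int a / of_int b) p"
proof -
  obtain k where "a = p * k" using assms(1) by blast
  then show ?thesis
    using p_integral_fraction[OF assms(2), of "- k"] unfolding cong_Zp_iff
    by (intro exI[of _ "of_int (- k) / of_int b"]) auto
qed

lemma cong_Zp_power_diff_inverse:
  assumes "[x ^ n = 1] (mod p)" "coprime x p" "x \<noteq> 0" "k \<le> n"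
  shows "cong_Zp (of_int (x ^ (n - k))) (1 / of_int (x ^ k)) p"
proof -
  obtain q where q: "x ^ n - 1 = p * q"
    using assms(1) by (metis cong_iff_dvd_diff dvdE)
  have "x ^ (n - k) * x ^ k = x ^ n"
    using assms(4) by (simp flip: power_add)
  then have "(of_int x :: rat) ^ (n - k) * of_int x ^ k = of_int x ^ n"
    by (metis of_int_mult of_int_power)
  then have "of_int (x ^ (n - k)) - 1 / of_int (x ^ k) = (of_int (x ^ n - 1) / of_int (x ^ k) :: rat)"
    using assms(3) by (simp add: field_simps flip: of_int_mult)
  also have "\<dots> = of_int p * (of_int q / of_int (x ^ k))"
    by (simp add: q)
  finally show ?thesis
    unfolding cong_Zp_iff using p_integral_fraction[of "x ^ k" p q] assms(2) by auto
qed

lemma fermat_theorem_int: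
  fixes p a :: int
  assumes "prime p" "\<not> p dvd a"
  shows "[a ^ (nat p - 1) = 1] (mod p)"
proof -
  have "p > 1" using assms(1) prime_gt_1_int by blast
  define q where "q = nat p"
  have p: "p = int q" "prime q" using assms(1) \<open>p > 1\<close> by (auto simp: q_def)
  have "\<not> int q dvd int (nat (a mod p))"
    using assms(2) \<open>p > 1\<close> by (simp add: dvd_mod_iff flip: p(1))
  then have "\<not> q dvd nat (a mod p)"
    by (metis int_dvd_int_iff)
  then have "[nat (a mod p) ^ (q - 1) = 1] (mod q)"
    using fermat_theorem[OF p(2)] by blast
  then have "[(a mod p) ^ (nat p - 1) = 1] (mod p)"
    using \<open>p > 1\<close> by (simp add: p flip: cong_int_iff)
  then show ?thesis
    by (simp add: cong_def power_mod)
qed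

lemma prime_exists_power_not_cong_1:
  fixes p :: int
  assumes "prime p" "\<not> (nat p - 1) dvd e"
  obtains g where "coprime g p" "\<not> [g ^ e = 1] (mod p)"
proof -
  have "p > 1" using assms(1) prime_gt_1_int by blast
  define q where "q = nat p"
  have p: "p = int q" "prime q" using assms(1) \<open>p > 1\<close> by (auto simp: q_def)
  obtain g where g: "residue_primroot q g"
    using prime_primitive_root_exists[OF prime_gt_1_nat[OF p(2)] p(2)] by blast
  then have "ord q g = q - 1" "coprime q g"
    using p(2) by (auto simp: residue_primroot_def totient_prime)
  then have "\<not> [g ^ e = 1] (mod q)"
    using assms(2) by (simp add: ord_divides' q_def)
  then have "\<not> [int g ^ e = 1] (mod p)"
    by (simp add: p flip: cong_int_iff)
  moreover have "coprime (int g) p"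
    using \<open>coprime q g\<close> by (simp add: p coprime_commute)
  ultimately show ?thesis using that by blast
qed

lemma prime_dvd_power_sum:
  fixes p :: int
  assumes p: "prime p" and "\<not> (nat p - 1) dvd e"
  shows "p dvd (\<Sum>x\<in>{0..<p}. x ^ e)"
proof -
  have "p > 1" using prime_gt_1_int[OF p] .
  obtain g where g: "coprime g p" "\<not> [g ^ e = 1] (mod p)"
    using prime_exists_power_not_cong_1[OF assms] by blast
  define S where "S = (\<Sum>x\<in>{0..<p}. x ^ e)"
  text \<open>Multiplication by the unit \<open>g\<close> permutes the residues, so \<open>S \<equiv> g\<^sup>e S\<close>.\<close>
  define h where "h x = (g * x) mod p" for x
  have inj: "inj_on h {0..<p}"
  proof
    fix x y assume "x \<in> {0..<p}" "y \<in> {0..<p}" "h x = h y"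
    then have "[x = y] (mod p)"
      using g(1) by (metis cong_def cong_mult_lcancel coprime_commute h_def)
    then show "x = y" using \<open>x \<in> _\<close> \<open>y \<in> _\<close> by (simp add: cong_def)
  qed
  have "h ` {0..<p} = {0..<p}"
    by (rule endo_inj_surj) (use inj \<open>p > 1\<close> in \<open>auto simp: h_def\<close>)
  then have "S = (\<Sum>x\<in>{0..<p}. h x ^ e)"
    unfolding S_def using sum.reindex[OF inj, of "\<lambda>x. x ^ e"] by simp
  also have "[\<dots> = (\<Sum>x\<in>{0..<p}. (g * x) ^ e)] (mod p)"
    by (intro cong_sum cong_pow) (simp add: h_def cong_def)
  also have "(\<Sum>x\<in>{0..<p}. (g * x) ^ e) = g ^ e * S"
    by (simp add: S_def power_mult_distrib sum_distrib_left)
  finally have "p dvd S - g ^ e * S"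
    by (simp add: cong_iff_dvd_diff)
  then have "p dvd (g ^ e - 1) * S"
    by (metis dvd_minus_iff minus_diff_eq mult.commute mult_1 right_diff_distrib)
  moreover have "\<not> p dvd g ^ e - 1"
    using g(2) by (simp add: cong_iff_dvd_diff)
  ultimately show ?thesis
    using p by (simp add: S_def prime_dvd_mult_iff)
qed

definition power_sum_residue :: "nat \<Rightarrow> nat \<Rightarrow> int" where
  "power_sum_residue n e = (if e > 0 \<and> n dvd e then -1 else 0)"

lemma power_sum_cong:
  fixes p :: int
  assumes p: "prime p"
  shows "[(\<Sum>x\<in>{0..<p}. x ^ e) = power_sum_residue (nat p - 1) e] (mod p)"
proof -
  have "p > 1" using assms(1) prime_gt_1_int by blast
  consider "e = 0" | "e > 0" "(nat p - 1) dvd e" | "\<not> (nat p - 1) dvd e"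
    by fastforce
  then show ?thesis
  proof cases
    case 1
    then show ?thesis using \<open>p > 1\<close> by (simp add: power_sum_residue_def cong_def)
  next
    case 2
    then obtain t where t: "e = (nat p - 1) * t" by blast
    have "{0..<p} = insert 0 {1..<p}" using \<open>p > 1\<close> by auto
    then have "(\<Sum>x\<in>{0..<p}. x ^ e) = (\<Sum>x\<in>{1..<p}. x ^ e)"
      using \<open>e > 0\<close> by simp
    also have "[\<dots> = (\<Sum>x\<in>{1..<p}. 1)] (mod p)"
    proof (rule cong_sum)
      fix x :: int
      assume "x \<in> {1..<p}"
      then have "\<not> p dvd x" by (auto dest: zdvd_imp_le)
      then have "[(x ^ (nat p - 1)) ^ t = 1 ^ t] (mod p)"
        by (intro cong_pow fermat_theorem_int p)
      then show "[x ^ e = 1] (mod p)" by (simp add: t power_mult)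
    qed
    also have "(\<Sum>x\<in>{1..<p}. 1::int) = p - 1" using \<open>p > 1\<close> by simp
    also have "[p - 1 = -1] (mod p)" by (simp add: cong_iff_dvd_diff)
    finally show ?thesis using 2 by (simp add: power_sum_residue_def)
  next
    case 3
    then show ?thesis
      using prime_dvd_power_sum[OF p 3] by (simp add: power_sum_residue_def cong_def dvd_eq_mod_eq_0)
  qed
qed

lemma binomial_pred_prime_cong:
  fixes p :: int
  assumes "prime p" "k \<le> nat p - 1"
  shows "[int ((nat p - 1) choose k) = (-1) ^ k] (mod p)"
  using assms(2)
proof (induction k)
  case (Suc k)
  define q where "q = nat p"
  have "p > 1" using assms(1) prime_gt_1_int by blast
  have p: "p = int q" "prime q" using assms(1) \<open>p > 1\<close> by (auto simp: q_def)
  have "(q - 1 choose Suc k) + (q - 1 choose k) = q choose Suc k"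
    using binomial_Suc_Suc[of "q - 1" k] \<open>p > 1\<close> by (simp add: q_def)
  moreover have "q dvd (q choose Suc k)"
    using Suc.prems \<open>p > 1\<close> by (intro dvd_choose_prime[OF _ _ _ p(2)]) (auto simp: q_def)
  ultimately have "[int (q - 1 choose Suc k) = - int (q - 1 choose k)] (mod p)"
    by (metis cong_iff_dvd_diff diff_minus_eq_add of_nat_add of_nat_dvd_iff p(1))
  also have "[- int (q - 1 choose k) = - ((-1) ^ k)] (mod p)"
    using Suc by (simp add: cong_minus_minus_iff q_def)
  finally show ?case by (simp add: q_def)
qed simp

lemma indicator_dvd_cong:
  fixes p y :: int
  assumes "prime p"
  shows "[(if p dvd y then 1 else 0) = 1 - y ^ (nat p - 1)] (mod p)"
proof (cases "p dvd y")
  case True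
  have "nat p - 1 > 0" using prime_gt_1_int[OF assms] by linarith
  then have "p dvd y ^ (nat p - 1)" using True assms by (simp add: prime_dvd_power_iff)
  then show ?thesis using True by (simp add: cong_iff_dvd_diff)
next
  case False
  then show ?thesis
    using fermat_theorem_int[OF assms] by (simp add: cong_iff_dvd_diff dvd_diff_commute)
qed

definition scale_vec :: "int \<Rightarrow> int \<Rightarrow> int \<times> int \<times> int \<times> int \<Rightarrow> int \<times> int \<times> int \<times> int" where
  "scale_vec p c = (\<lambda>(x1, x2, x3, x4). ((c * x1) mod p, (c * x2) mod p, (c * x3) mod p, (c * x4) mod p))"

lemma mem_nonzero_vecs:
  "(x1, x2, x3, x4) \<in> nonzero_vecs p \<longleftrightarrow>
     x1 \<in> {0..<p} \<and> x2 \<in> {0..<p} \<and> x3 \<in> {0..<p} \<and> x4 \<in> {0..<p} \<and>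
     (x1 \<noteq> 0 \<or> x2 \<noteq> 0 \<or> x3 \<noteq> 0 \<or> x4 \<noteq> 0)"
  by (auto simp: nonzero_vecs_def)

lemma finite_nonzero_vecs: "finite (nonzero_vecs p)"
  by (rule finite_subset[of _ "{0..<p} \<times> {0..<p} \<times> {0..<p} \<times> {0..<p}"])
     (auto simp: nonzero_vecs_def)

lemma nonzero_residue_not_dvd:
  fixes p x :: int
  assumes "x \<in> {0..<p}" "x \<noteq> 0"
  shows "\<not> p dvd x"
  using assms by (auto dest: zdvd_imp_le)

lemma prime_not_dvd_mult_residues:
  fixes p c x :: int
  assumes "prime p" "c \<in> {1..<p}" "x \<in> {0..<p}" "x \<noteq> 0"
  shows "\<not> p dvd c * x"
  using assms nonzero_residue_not_dvd[of c p] nonzero_residue_not_dvd[OF assms(3,4)]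
  by (auto simp: prime_dvd_mult_iff)

lemma scale_vec_mem:
  assumes "prime p" "c \<in> {1..<p}" "v \<in> nonzero_vecs p"
  shows "scale_vec p c v \<in> nonzero_vecs p"
proof -
  obtain x1 x2 x3 x4 where v: "v = (x1, x2, x3, x4)" by (cases v) auto
  have "p > 0" using assms(1) prime_gt_0_int by blast
  with assms prime_not_dvd_mult_residues[OF assms(1,2)] show ?thesis
    by (auto simp: v scale_vec_def mem_nonzero_vecs)
qed

lemma scale_vec_1:
  assumes "v \<in> nonzero_vecs p"
  shows "scale_vec p 1 v = v"
  using assms by (cases v) (auto simp: scale_vec_def mem_nonzero_vecs)

lemma scale_vec_scale_vec: "scale_vec p d (scale_vec p c v) = scale_vec p ((d * c) mod p) v"
  by (cases v) (simp add: scale_vec_def mod_mult_right_eq mod_mult_left_eq mult.assoc)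

lemma proj_rel_iff:
  "(v, w) \<in> proj_rel p \<longleftrightarrow>
     v \<in> nonzero_vecs p \<and> w \<in> nonzero_vecs p \<and> (\<exists>c\<in>{1..<p}. w = scale_vec p c v)"
proof -
  obtain x1 x2 x3 x4 where v: "v = (x1, x2, x3, x4)" by (cases v) auto
  obtain y1 y2 y3 y4 where w: "w = (y1, y2, y3, y4)" by (cases w) auto
  have "[y = c * x] (mod p) \<longleftrightarrow> y = (c * x) mod p" if "y \<in> {0..<p}" for x y c
    using that by (simp add: cong_def)
  then show ?thesis
    unfolding v w proj_rel_def mem_nonzero_vecs scale_vec_def by auto
qed

lemma units_mod_prime_mult_closed:
  fixes p c d :: int
  assumes "prime p" "c \<in> {1..<p}" "d \<in> {1..<p}"
  shows "(d * c) mod p \<in> {1..<p}"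
proof -
  have "(d * c) mod p \<noteq> 0"
    using prime_not_dvd_mult_residues[OF assms(1,3), of c] assms(2) by (simp add: mod_eq_0_iff_dvd)
  moreover have "0 \<le> (d * c) mod p" "(d * c) mod p < p"
    using prime_gt_0_int[OF assms(1)] by simp_all
  ultimately show ?thesis by simp
qed

lemma units_mod_prime_inverse:
  fixes p c :: int
  assumes "prime p" "c \<in> {1..<p}"
  obtains d where "d \<in> {1..<p}" "(d * c) mod p = 1"
proof -
  have "p > 1" using prime_gt_1_int[OF assms(1)] .
  have "coprime c p"
    using nonzero_residue_not_dvd[of c p] assms prime_imp_coprime[OF assms(1)]
    by (simp add: coprime_commute)
  then obtain d where "[c * d = 1] (mod p)" using cong_solve_coprime_int by blast
  then have inv: "(d mod p * c) mod p = 1"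
    using \<open>p > 1\<close> by (simp add: cong_def mod_mult_right_eq mult.commute)
  then have "d mod p \<noteq> 0" by (metis mod_0 mult_zero_left zero_neq_one)
  moreover have "0 \<le> d mod p" "d mod p < p" using \<open>p > 1\<close> by simp_all
  ultimately show ?thesis using that[of "d mod p"] inv by simp
qed

lemma equiv_proj_rel:
  assumes "prime p"
  shows "equiv (nonzero_vecs p) (proj_rel p)"
proof (rule equivI)
  show "refl_on (nonzero_vecs p) (proj_rel p)"
    using prime_gt_1_int[OF assms] scale_vec_1
    by (auto intro!: refl_onI bexI[of _ 1] simp: proj_rel_iff)
  show "sym (proj_rel p)"
  proof (rule symI)
    fix v w assume "(v, w) \<in> proj_rel p"
    then obtain c where c: "c \<in> {1..<p}" "w = scale_vec p c v" "v \<in> nonzero_vecs p" "w \<in> nonzero_vecs p"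
      by (auto simp: proj_rel_iff)
    obtain d where d: "d \<in> {1..<p}" "(d * c) mod p = 1"
      using units_mod_prime_inverse[OF assms c(1)] by blast
    then have "v = scale_vec p d w"
      using c by (simp add: scale_vec_scale_vec scale_vec_1)
    with c d show "(w, v) \<in> proj_rel p"
      by (auto simp: proj_rel_iff)
  qed
  show "trans (proj_rel p)"
    using units_mod_prime_mult_closed[OF assms]
    by (intro transI) (auto simp: proj_rel_iff scale_vec_scale_vec)
qed (auto simp: proj_rel_iff)

lemma card_proj_class:
  assumes "prime p" "v \<in> nonzero_vecs p"
  shows "card (proj_rel p `` {v}) = nat p - 1"
proof -
  have "w \<in> proj_rel p `` {v} \<longleftrightarrow> w \<in> (\<lambda>c. scale_vec p c v) ` {1..<p}" for w
    using assms scale_vec_mem[OF assms(1) _ assms(2)] by (auto simp: proj_rel_iff)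
  then have class_eq: "proj_rel p `` {v} = (\<lambda>c. scale_vec p c v) ` {1..<p}"
    by blast
  obtain x1 x2 x3 x4 where v: "v = (x1, x2, x3, x4)" by (cases v) auto
  have "inj_on (\<lambda>c. scale_vec p c v) {1..<p}"
  proof
    fix c d assume cd: "c \<in> {1..<p}" "d \<in> {1..<p}" "scale_vec p c v = scale_vec p d v"
    obtain x where x: "x \<in> {0..<p}" "x \<noteq> 0" "(c * x) mod p = (d * x) mod p"
      using assms(2) cd(3) unfolding v mem_nonzero_vecs scale_vec_def by auto
    have "coprime x p"
      using nonzero_residue_not_dvd[OF x(1,2)] assms(1) prime_imp_coprime coprime_commute by blast
    with x(3) have "[c = d] (mod p)"
      by (metis cong_def cong_mult_lcancel mult.commute)
    with cd show "c = d" by (simp add: cong_def)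
  qed
  then show ?thesis by (simp add: class_eq card_image)
qed

lemma card_nonzero_vecs_invariant:
  assumes p: "prime p"
    and invariant: "\<And>c v. c \<in> {1..<p} \<Longrightarrow> v \<in> nonzero_vecs p \<Longrightarrow> P (scale_vec p c v) \<longleftrightarrow> P v"
  shows "card {v \<in> nonzero_vecs p. P v} = (nat p - 1) * card {C \<in> proj_points p. \<forall>v\<in>C. P v}"
proof -
  let ?V = "nonzero_vecs p" and ?R = "proj_rel p"
  define \<C> where "\<C> = {C \<in> ?V // ?R. \<forall>v\<in>C. P v}"
  have eq: "equiv ?V ?R" by (rule equiv_proj_rel[OF p])
  have "{v \<in> ?V. P v} = \<Union>\<C>"
  proof (intro equalityI subsetI)
    fix v assume v: "v \<in> {v \<in> ?V. P v}"
    then have "\<forall>w\<in>?R``{v}. P w"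
      using invariant by (auto simp: proj_rel_iff)
    then have "?R``{v} \<in> \<C>" using v by (auto simp: \<C>_def intro: quotientI)
    moreover have "v \<in> ?R``{v}" using v equiv_class_self[OF eq] by blast
    ultimately show "v \<in> \<Union>\<C>" by blast
  qed (use eq in \<open>auto simp: \<C>_def dest: in_quotient_imp_subset\<close>)
  moreover have "pairwise disjnt \<C>"
    unfolding pairwise_def disjnt_def \<C>_def using quotient_disj[OF eq] by blast
  moreover have "finite C" if "C \<in> \<C>" for C
    using that in_quotient_imp_subset[OF eq] finite_nonzero_vecs
    unfolding \<C>_def by (blast intro: finite_subset)
  ultimately have "card {v \<in> ?V. P v} = sum card \<C>"
    by (simp add: card_Union_disjoint)
  also have "\<dots> = sum (\<lambda>_. nat p - 1) \<C>"
    using card_proj_class[OF p] by (intro sum.cong) (auto simp: \<C>_def elim!: quotientE)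
  finally show ?thesis by (simp add: \<C>_def proj_points_def)
qed

definition dwork_form :: "'a::comm_ring_1 \<Rightarrow> 'a \<times> 'a \<times> 'a \<times> 'a \<Rightarrow> 'a" where
  "dwork_form c = (\<lambda>(x1, x2, x3, x4). x1 ^ 4 + x2 ^ 4 + x3 ^ 4 + x4 ^ 4 - c * x1 * x2 * x3 * x4)"

definition dwork_coeff :: "nat \<Rightarrow> 'a::comm_ring_1 \<Rightarrow> nat \<Rightarrow> nat \<Rightarrow> nat \<Rightarrow> nat \<Rightarrow> 'a" where
  "dwork_coeff n c b k1 k2 k3 = of_nat (n choose b) * (- c) ^ b * of_nat ((n - b) choose k1)
     * of_nat ((n - b - k1) choose k2) * of_nat ((n - b - k1 - k2) choose k3)"

definition dwork_binom :: "nat \<Rightarrow> nat" where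
  "dwork_binom a = ((4 * a) choose a) * ((3 * a) choose a) * ((2 * a) choose a)"

lemma binomial_ring_atMost:
  fixes u v :: "'a::comm_ring_1"
  assumes "m \<le> N"
  shows "(u + v) ^ m = (\<Sum>k\<le>N. of_nat (m choose k) * u ^ k * v ^ (m - k))"
  unfolding binomial_ring using assms
  by (intro sum.mono_neutral_left) (auto intro: ccontr simp: binomial_eq_0 not_le)

text \<open>All four sums run up to \<open>n\<close>, vanishing binomial coefficients padding the ranges,
  so that the index set is a box.\<close>
lemma power_dwork_form_expansion:
  fixes c x1 x2 x3 x4 :: "'a::comm_ring_1"
  shows "dwork_form c (x1, x2, x3, x4) ^ n =
    (\<Sum>b\<le>n. \<Sum>k1\<le>n. \<Sum>k2\<le>n. \<Sum>k3\<le>n. dwork_coeff n c b k1 k2 k3 *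
       (x1 ^ (b + 4 * k1) * x2 ^ (b + 4 * k2) * x3 ^ (b + 4 * k3) * x4 ^ (b + 4 * (n - b - k1 - k2 - k3))))"
proof -
  have neg: "(- (c * y)) ^ b = (- c) ^ b * y ^ b" for y :: 'a and b
    by (simp add: power_mult_distrib flip: mult_minus_left)
  have "dwork_form c (x1, x2, x3, x4) ^ n = (- c * x1 * x2 * x3 * x4 + (x1 ^ 4 + (x2 ^ 4 + (x3 ^ 4 + x4 ^ 4)))) ^ n"
    by (simp add: dwork_form_def algebra_simps)
  also have "\<dots> = (\<Sum>b\<le>n. of_nat (n choose b) * (- c * x1 * x2 * x3 * x4) ^ b *
      (x1 ^ 4 + (x2 ^ 4 + (x3 ^ 4 + x4 ^ 4))) ^ (n - b))"
    by (rule binomial_ring)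
  also have "\<dots> = (\<Sum>b\<le>n. of_nat (n choose b) * (- c * x1 * x2 * x3 * x4) ^ b *
      (\<Sum>k1\<le>n. of_nat ((n - b) choose k1) * (x1 ^ 4) ^ k1 *
      (\<Sum>k2\<le>n. of_nat ((n - b - k1) choose k2) * (x2 ^ 4) ^ k2 *
      (\<Sum>k3\<le>n. of_nat ((n - b - k1 - k2) choose k3) * (x3 ^ 4) ^ k3 * (x4 ^ 4) ^ (n - b - k1 - k2 - k3)))))"
    by (simp only: binomial_ring_atMost[of "_ - _" n] diff_le_self)
  also have "\<dots> = (\<Sum>b\<le>n. \<Sum>k1\<le>n. \<Sum>k2\<le>n. \<Sum>k3\<le>n. dwork_coeff n c b k1 k2 k3 *
       (x1 ^ (b + 4 * k1) * x2 ^ (b + 4 * k2) * x3 ^ (b + 4 * k3) * x4 ^ (b + 4 * (n - b - k1 - k2 - k3))))"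
    by (simp add: dwork_coeff_def sum_distrib_left power_add power_mult_distrib neg ac_simps
             flip: power_mult)
  finally show ?thesis .
qed

lemma sum_box_prod:
  fixes f1 f2 f3 f4 :: "'a \<Rightarrow> 'b::comm_semiring_0"
  shows "(\<Sum>(x1, x2, x3, x4)\<in>A \<times> A \<times> A \<times> A. f1 x1 * f2 x2 * f3 x3 * f4 x4)
    = sum f1 A * sum f2 A * sum f3 A * sum f4 A"
  by (simp add: mult.assoc flip: sum.cartesian_product sum_distrib_left sum_distrib_right)

lemma sum_box_power_dwork_form:
  fixes c :: "'a::comm_ring_1"
  shows "(\<Sum>x\<in>A \<times> A \<times> A \<times> A. dwork_form c x ^ n) =
    (\<Sum>(b, k1, k2, k3)\<in>{..n} \<times> {..n} \<times> {..n} \<times> {..n}. dwork_coeff n c b k1 k2 k3 *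
      ((\<Sum>x\<in>A. x ^ (b + 4 * k1)) * (\<Sum>x\<in>A. x ^ (b + 4 * k2)) * (\<Sum>x\<in>A. x ^ (b + 4 * k3))
       * (\<Sum>x\<in>A. x ^ (b + 4 * (n - b - k1 - k2 - k3)))))"
proof -
  let ?K = "{..n} \<times> {..n} \<times> {..n} \<times> {..n}"
  define G where "G = (\<lambda>(x1, x2, x3, x4) (b, k1, k2, k3). dwork_coeff n c b k1 k2 k3 *
    (x1 ^ (b + 4 * k1) * x2 ^ (b + 4 * k2) * x3 ^ (b + 4 * k3) * x4 ^ (b + 4 * (n - b - k1 - k2 - k3))))"
  have "(\<Sum>x\<in>A \<times> A \<times> A \<times> A. dwork_form c x ^ n) = (\<Sum>x\<in>A \<times> A \<times> A \<times> A. \<Sum>t\<in>?K. G x t)"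
    by (intro sum.cong refl)
       (auto simp: power_dwork_form_expansion sum.cartesian_product G_def)
  also have "\<dots> = (\<Sum>t\<in>?K. \<Sum>x\<in>A \<times> A \<times> A \<times> A. G x t)"
    by (rule sum.swap)
  also have "\<dots> = (\<Sum>(b, k1, k2, k3)\<in>?K. dwork_coeff n c b k1 k2 k3 *
      ((\<Sum>x\<in>A. x ^ (b + 4 * k1)) * (\<Sum>x\<in>A. x ^ (b + 4 * k2)) * (\<Sum>x\<in>A. x ^ (b + 4 * k3))
       * (\<Sum>x\<in>A. x ^ (b + 4 * (n - b - k1 - k2 - k3)))))"
  proof (intro sum.cong refl)
    fix t assume "t \<in> ?K"
    obtain b k1 k2 k3 where t: "t = (b, k1, k2, k3)" by (cases t) auto
    have "(\<Sum>x\<in>A \<times> A \<times> A \<times> A. G x t) = dwork_coeff n c b k1 k2 k3 *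
      (\<Sum>(x1, x2, x3, x4)\<in>A \<times> A \<times> A \<times> A.
         x1 ^ (b + 4 * k1) * x2 ^ (b + 4 * k2) * x3 ^ (b + 4 * k3) * x4 ^ (b + 4 * (n - b - k1 - k2 - k3)))"
      by (simp add: G_def t sum_distrib_left case_prod_unfold)
    then show "(\<Sum>x\<in>A \<times> A \<times> A \<times> A. G x t) = (case t of (b, k1, k2, k3) \<Rightarrow> dwork_coeff n c b k1 k2 k3 *
      ((\<Sum>x\<in>A. x ^ (b + 4 * k1)) * (\<Sum>x\<in>A. x ^ (b + 4 * k2)) * (\<Sum>x\<in>A. x ^ (b + 4 * k3))
       * (\<Sum>x\<in>A. x ^ (b + 4 * (n - b - k1 - k2 - k3)))))"
      by (simp only: t sum_box_prod prod.case)
  qed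
  finally show ?thesis .
qed

text \<open>The four exponents add up to \<open>4 n\<close> and, for a nonzero term, are positive multiples
  of \<open>n\<close>; hence all of them equal \<open>n\<close>.\<close>
lemma dwork_exponents_eq_if_nonzero:
  fixes c :: int
  assumes "dwork_coeff n c b k1 k2 k3 \<noteq> 0"
    and "power_sum_residue n (b + 4 * k1) \<noteq> 0" "power_sum_residue n (b + 4 * k2) \<noteq> 0"
    and "power_sum_residue n (b + 4 * k3) \<noteq> 0" "power_sum_residue n (b + 4 * (n - b - k1 - k2 - k3)) \<noteq> 0"
  shows "b + 4 * k1 = n" "b + 4 * k2 = n" "b + 4 * k3 = n"
proof -
  have ge: "n \<le> e" if "power_sum_residue n e \<noteq> 0" for e
    using that by (auto simp: power_sum_residue_def dvd_imp_le split: if_splits)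
  have "b \<le> n" "k1 \<le> n - b" "k2 \<le> n - b - k1" "k3 \<le> n - b - k1 - k2"
    using assms(1) by (auto simp: dwork_coeff_def binomial_eq_0_iff)
  moreover have "n \<le> b + 4 * k1" "n \<le> b + 4 * k2" "n \<le> b + 4 * k3" "n \<le> b + 4 * (n - b - k1 - k2 - k3)"
    using assms(2-5) ge by blast+
  ultimately show "b + 4 * k1 = n" "b + 4 * k2 = n" "b + 4 * k3 = n"
    by linarith+
qed

lemma sum_dwork_coeff_power_sum_residue:
  fixes c :: int
  assumes n: "n > 0" "4 dvd n"
  shows "(\<Sum>(b, k1, k2, k3)\<in>{..n} \<times> {..n} \<times> {..n} \<times> {..n}. dwork_coeff n c b k1 k2 k3 *
      (power_sum_residue n (b + 4 * k1) * power_sum_residue n (b + 4 * k2)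
       * power_sum_residue n (b + 4 * k3) * power_sum_residue n (b + 4 * (n - b - k1 - k2 - k3))))
    = (\<Sum>a\<le>n div 4. int (n choose (4 * a)) * c ^ (n - 4 * a) * int (dwork_binom a))"
proof -
  let ?K = "{..n} \<times> {..n} \<times> {..n} \<times> {..n}"
  define g where "g = (\<lambda>(b, k1, k2, k3). dwork_coeff n c b k1 k2 k3 *
      (power_sum_residue n (b + 4 * k1) * power_sum_residue n (b + 4 * k2)
       * power_sum_residue n (b + 4 * k3) * power_sum_residue n (b + 4 * (n - b - k1 - k2 - k3))))"
  define \<phi> where "\<phi> a = (n - 4 * a, a, a, a)" for a
  have vanish: "g t = 0" if "t \<in> ?K" "t \<notin> \<phi> ` {..n div 4}" for t
  proof (rule ccontr)
    assume "g t \<noteq> 0"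
    moreover obtain b k1 k2 k3 where t: "t = (b, k1, k2, k3)" by (cases t) auto
    ultimately have "b + 4 * k1 = n" "b + 4 * k2 = n" "b + 4 * k3 = n"
      using dwork_exponents_eq_if_nonzero[of n c b k1 k2 k3] by (auto simp: g_def)
    then have "t = \<phi> k1" "k1 \<in> {..n div 4}"
      by (auto simp: t \<phi>_def)
    with that show False by blast
  qed
  have "(\<Sum>t\<in>?K. g t) = (\<Sum>t\<in>\<phi> ` {..n div 4}. g t)"
    by (rule sum.mono_neutral_right) (use vanish in \<open>auto simp: \<phi>_def\<close>)
  also have "\<dots> = (\<Sum>a\<le>n div 4. g (\<phi> a))"
    by (rule sum.reindex[unfolded comp_def]) (auto simp: inj_on_def \<phi>_def)
  also have "\<dots> = (\<Sum>a\<le>n div 4. int (n choose (4 * a)) * c ^ (n - 4 * a) * int (dwork_binom a))"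
  proof (intro sum.cong refl)
    fix a assume "a \<in> {..n div 4}"
    then have a: "4 * a \<le> n" using n(2) by auto
    have "even (n - 4 * a)" using n(2) a by (auto elim!: dvdE)
    then have "(- c) ^ (n - 4 * a) = c ^ (n - 4 * a)" by simp
    moreover have "n - (n - 4 * a) = 4 * a" "4 * a - a = 3 * a" "3 * a - a = 2 * a" "2 * a - a = a"
      "n - (n - 4 * a) - a - a - a = a" "n - 4 * a + 4 * a = n"
      using a by auto
    ultimately show "g (\<phi> a) = int (n choose (4 * a)) * c ^ (n - 4 * a) * int (dwork_binom a)"
      using n(1) a by (simp add: g_def \<phi>_def dwork_coeff_def dwork_binom_def power_sum_residue_def
                                 binomial_symmetric[OF a, symmetric])
  qed
  finally show ?thesis by (simp add: g_def)
qed

lemma sum_box_power_dwork_form_cong: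
  fixes p c :: int
  assumes p: "prime p" and "4 dvd (nat p - 1)"
  shows "[(\<Sum>x\<in>{0..<p} \<times> {0..<p} \<times> {0..<p} \<times> {0..<p}. dwork_form c x ^ (nat p - 1))
     = (\<Sum>a\<le>(nat p - 1) div 4. int (dwork_binom a) * c ^ (nat p - 1 - 4 * a))] (mod p)"
proof -
  define n where "n = nat p - 1"
  have "n > 0" "4 dvd n" using prime_gt_1_int[OF p] assms(2) by (simp_all add: n_def)
  have residue: "[(\<Sum>x\<in>{0..<p}. x ^ e) = power_sum_residue n e] (mod p)" for e
    unfolding n_def by (rule power_sum_cong[OF p])
  let ?S = "\<Sum>(b, k1, k2, k3)\<in>{..n} \<times> {..n} \<times> {..n} \<times> {..n}. dwork_coeff n c b k1 k2 k3 *
      (power_sum_residue n (b + 4 * k1) * power_sum_residue n (b + 4 * k2)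
       * power_sum_residue n (b + 4 * k3) * power_sum_residue n (b + 4 * (n - b - k1 - k2 - k3)))"
  let ?T = "\<Sum>a\<le>n div 4. int (n choose (4 * a)) * c ^ (n - 4 * a) * int (dwork_binom a)"
  have "[(\<Sum>x\<in>{0..<p} \<times> {0..<p} \<times> {0..<p} \<times> {0..<p}. dwork_form c x ^ n) = ?S] (mod p)"
    unfolding sum_box_power_dwork_form
    by (intro cong_sum) (auto intro!: cong_mult cong_refl residue)
  also have "?S = ?T"
    by (rule sum_dwork_coeff_power_sum_residue[OF \<open>n > 0\<close> \<open>4 dvd n\<close>])
  also have "[?T = (\<Sum>a\<le>n div 4. 1 * c ^ (n - 4 * a) * int (dwork_binom a))] (mod p)"
  proof (intro cong_sum cong_mult cong_refl)
    fix a assume "a \<in> {..n div 4}"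
    then have "4 * a \<le> n" by auto
    then show "[int (n choose (4 * a)) = 1] (mod p)"
      using binomial_pred_prime_cong[OF p, of "4 * a"] by (simp add: n_def power_mult)
  qed
  finally show ?thesis by (simp add: n_def mult.commute)
qed

lemma dwork_form_scale_vec_dvd_iff:
  fixes p a c :: int
  assumes p: "prime p" and c: "c \<in> {1..<p}"
  shows "p dvd dwork_form a (scale_vec p c v) \<longleftrightarrow> p dvd dwork_form a v"
proof -
  obtain x1 x2 x3 x4 where v: "v = (x1, x2, x3, x4)" by (cases v) auto
  have mod: "[(c * x) mod p = c * x] (mod p)" for x
    by (simp add: cong_def)
  have "[dwork_form a (scale_vec p c v) = dwork_form a (c * x1, c * x2, c * x3, c * x4)] (mod p)"
    unfolding v scale_vec_def dwork_form_def prod.case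
    by (intro cong_add cong_diff cong_mult cong_pow cong_refl mod)
  moreover have "dwork_form a (c * x1, c * x2, c * x3, c * x4) = c ^ 4 * dwork_form a v"
    by (simp add: v dwork_form_def algebra_simps power_mult_distrib eval_nat_numeral)
  moreover have "\<not> p dvd c ^ 4"
    using c p by (auto simp: prime_dvd_power_iff dest: zdvd_imp_le)
  ultimately show ?thesis
    using p by (simp add: cong_dvd_iff prime_dvd_mult_iff)
qed

lemma card_dwork_affine_solutions:
  fixes p lam :: int
  assumes p: "prime p"
  shows "card {v \<in> {0..<p} \<times> {0..<p} \<times> {0..<p} \<times> {0..<p}. p dvd dwork_form (4 * lam) v}
    = (nat p - 1) * dwork_count p lam + 1"
proof -
  let ?P = "\<lambda>v. p dvd dwork_form (4 * lam) v"
  have "{v \<in> {0..<p} \<times> {0..<p} \<times> {0..<p} \<times> {0..<p}. ?P v} = insert (0, 0, 0, 0) {v \<in> nonzero_vecs p. ?P v}"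
    using prime_gt_1_int[OF p] by (auto simp: nonzero_vecs_def dwork_form_def)
  moreover have "(0, 0, 0, 0) \<notin> nonzero_vecs p"
    by (simp add: nonzero_vecs_def)
  moreover have "dwork_count p lam = card {C \<in> proj_points p. \<forall>v\<in>C. ?P v}"
    by (simp add: dwork_count_def dwork_form_def cong_iff_dvd_diff case_prod_unfold)
  ultimately show ?thesis
    using card_nonzero_vecs_invariant[OF p, of ?P] dwork_form_scale_vec_dvd_iff[OF p]
      finite_nonzero_vecs by simp
qed

lemma card_dvd_cong_sum_power:
  fixes p :: int and f :: "'a \<Rightarrow> int"
  assumes p: "prime p" and "finite B"
  shows "[int (card {v \<in> B. p dvd f v}) = (\<Sum>v\<in>B. 1 - f v ^ (nat p - 1))] (mod p)"
proof -
  have "int (card {v \<in> B. p dvd f v}) = (\<Sum>v\<in>B. if p dvd f v then 1 else 0)"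
    using assms(2) by (simp flip: sum.inter_filter)
  also have "[\<dots> = (\<Sum>v\<in>B. 1 - f v ^ (nat p - 1))] (mod p)"
    by (intro cong_sum indicator_dvd_cong[OF p])
  finally show ?thesis .
qed

lemma dwork_count_cong:
  fixes p lam :: int
  assumes p: "prime p" and "4 dvd (nat p - 1)"
  shows "[int (dwork_count p lam) - p ^ 2 - 1
     = (\<Sum>a\<le>(nat p - 1) div 4. int (dwork_binom a) * (4 * lam) ^ (nat p - 1 - 4 * a))] (mod p)"
proof -
  define B where "B = {0..<p} \<times> {0..<p} \<times> {0..<p} \<times> {0..<p}"
  define N where "N = int (dwork_count p lam)"
  define T where "T = (\<Sum>a\<le>(nat p - 1) div 4. int (dwork_binom a) * (4 * lam) ^ (nat p - 1 - 4 * a))"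
  have "p > 1" using prime_gt_1_int[OF p] .
  have "int (card {v \<in> B. p dvd dwork_form (4 * lam) v}) = (p - 1) * N + 1"
    using card_dwork_affine_solutions[OF p, of lam] \<open>p > 1\<close> by (simp add: B_def N_def of_nat_diff)
  moreover have "[int (card {v \<in> B. p dvd dwork_form (4 * lam) v})
      = (\<Sum>v\<in>B. 1 - dwork_form (4 * lam) v ^ (nat p - 1))] (mod p)"
    by (rule card_dvd_cong_sum_power[OF p]) (simp add: B_def)
  moreover have "(\<Sum>v\<in>B. 1 - dwork_form (4 * lam) v ^ (nat p - 1))
      = p ^ 4 - (\<Sum>v\<in>B. dwork_form (4 * lam) v ^ (nat p - 1))"
    using \<open>p > 1\<close> by (simp add: B_def sum_subtractf card_cartesian_product eval_nat_numeral)
  moreover have "[(\<Sum>v\<in>B. dwork_form (4 * lam) v ^ (nat p - 1)) = T] (mod p)"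
    unfolding B_def T_def by (rule sum_box_power_dwork_form_cong[OF p assms(2)])
  ultimately have "[(p - 1) * N + 1 = p ^ 4 - T] (mod p)"
    by (metis cong_diff cong_refl cong_trans)
  then obtain k where k: "(p - 1) * N + 1 - (p ^ 4 - T) = p * k"
    by (metis cong_iff_dvd_diff dvdE)
  have "N - p ^ 2 - 1 - T = p * N - p ^ 4 - p ^ 2 - p * k"
    unfolding k[symmetric] by (simp add: algebra_simps)
  also have "\<dots> = p * (N - p ^ 3 - p - k)"
    by (simp add: algebra_simps eval_nat_numeral)
  finally have "N - p ^ 2 - 1 - T = p * (N - p ^ 3 - p - k)" .
  then show ?thesis
    by (simp add: N_def T_def cong_iff_dvd_diff)
qed

lemma fact_eq_dwork_binom:
  "fact (4 * j) = (of_nat (dwork_binom j * fact j ^ 4) :: 'a::semiring_char_0)"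
proof -
  have "fact (4 * j) = fact j * fact (3 * j) * ((4 * j) choose j)"
    "fact (3 * j) = fact j * fact (2 * j) * ((3 * j) choose j)"
    "fact (2 * j) = fact j * fact j * ((2 * j) choose j)"
    using binomial_fact_lemma[of j "4 * j"] binomial_fact_lemma[of j "3 * j"]
      binomial_fact_lemma[of j "2 * j"] by simp_all
  then have "fact (4 * j) = dwork_binom j * fact j ^ 4"
    by (simp add: dwork_binom_def eval_nat_numeral ac_simps)
  then show ?thesis by (metis of_nat_fact)
qed

lemma pochhammer_quarters:
  "256 ^ j * pochhammer (1 / 4) j * pochhammer (2 / 4) j * pochhammer (3 / 4) j * fact j
     = (fact (4 * j) :: 'a::field_char_0)"
proof (induction j)
  case (Suc j)
  have "4 * Suc j = Suc (Suc (Suc (Suc (4 * j))))" by simp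
  then have fact: "fact (4 * Suc j) = (fact (4 * j) :: 'a) * ((of_nat j + 1 / 4) * (of_nat j + 2 / 4)
      * (of_nat j + 3 / 4) * 256 * (of_nat j + 1))"
    by (simp only: fact_Suc) (simp add: field_simps)
  have "256 ^ Suc j * pochhammer (1 / 4) (Suc j) * pochhammer (2 / 4) (Suc j) * pochhammer (3 / 4) (Suc j)
      * fact (Suc j) = (256 ^ j * pochhammer (1 / 4) j * pochhammer (2 / 4) j * pochhammer (3 / 4) j * fact j)
      * ((of_nat j + 1 / 4) * (of_nat j + 2 / 4) * (of_nat j + 3 / 4) * 256 * (of_nat j + 1) :: 'a)"
    by (simp add: pochhammer_Suc fact_Suc algebra_simps)
  then show ?case by (simp only: Suc.IH fact)
qed simp

lemma hypergeometric_coeff_eq: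
  fixes lam :: int
  shows "pochhammer (1 / 4 :: rat) j * pochhammer (2 / 4) j * pochhammer (3 / 4) j / fact j ^ 3
      * inverse (of_int lam) ^ (4 * j) = of_nat (dwork_binom j) / of_int ((4 * lam) ^ (4 * j))"
proof -
  have "256 ^ j * (pochhammer (1 / 4 :: rat) j * pochhammer (2 / 4) j * pochhammer (3 / 4) j) * fact j
      = of_nat (dwork_binom j) * fact j ^ 3 * fact j"
    using pochhammer_quarters[of j, where 'a = rat] fact_eq_dwork_binom[of j, where 'a = rat]
    by (simp add: eval_nat_numeral ac_simps)
  then have "pochhammer (1 / 4 :: rat) j * pochhammer (2 / 4) j * pochhammer (3 / 4) j / fact j ^ 3
      = of_nat (dwork_binom j) / 256 ^ j"
    by (simp add: field_simps)
  then have "pochhammer (1 / 4 :: rat) j * pochhammer (2 / 4) j * pochhammer (3 / 4) j / fact j ^ 3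
      * inverse (of_int lam) ^ (4 * j) = of_nat (dwork_binom j) / (256 ^ j * of_int lam ^ (4 * j))"
    by (simp only: power_inverse divide_inverse inverse_mult_distrib mult.assoc)
  also have "256 ^ j * of_int lam ^ (4 * j) = (of_int ((4 * lam) ^ (4 * j)) :: rat)"
    by (simp add: power_mult_distrib power_mult)
  finally show ?thesis .
qed

lemma prime_dvd_dwork_binom:
  fixes q :: nat
  assumes "prime q" "j < q" "q \<le> 4 * j"
  shows "q dvd dwork_binom j"
proof -
  have "q dvd fact (4 * j)" using assms by (simp add: prime_dvd_fact_iff)
  then have "q dvd dwork_binom j * fact j ^ 4" by (simp add: fact_eq_dwork_binom[where 'a = nat])
  moreover have "\<not> q dvd fact j ^ 4" using assms by (simp add: prime_dvd_power_iff prime_dvd_fact_iff)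
  ultimately show ?thesis using assms(1) by (simp add: prime_dvd_mult_iff)
qed

lemma dwork_summand_cong:
  fixes p lam :: int
  assumes p: "prime p" and n: "n = nat p - 1" and "\<not> p dvd 4 * lam" and "j < nat p"
  shows "cong_Zp (if 4 * j \<le> n then of_int (int (dwork_binom j) * (4 * lam) ^ (n - 4 * j)) else 0)
                 (of_nat (dwork_binom j) / of_int ((4 * lam) ^ (4 * j))) p"
proof -
  have unit: "coprime (4 * lam) p" "4 * lam \<noteq> 0"
    using prime_imp_coprime[OF p assms(3)] assms(3) by (auto simp: coprime_commute)
  show ?thesis
  proof (cases "4 * j \<le> n")
    case True
    have "[(4 * lam) ^ n = 1] (mod p)"
      using fermat_theorem_int[OF p assms(3)] by (simp add: n)
    from cong_Zp_power_diff_inverse[OF this unit True]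
    have "cong_Zp (of_int (int (dwork_binom j)) * of_int ((4 * lam) ^ (n - 4 * j)))
        (of_int (int (dwork_binom j)) * (1 / of_int ((4 * lam) ^ (4 * j)))) p"
      by (intro cong_Zp_mult_left p_integral_of_int)
    with True show ?thesis by simp
  next
    case False
    then have "nat p \<le> 4 * j" using n by linarith
    then have "nat p dvd dwork_binom j"
      using prime_dvd_dwork_binom[of "nat p" j] p \<open>j < nat p\<close> by simp
    then have "p dvd int (dwork_binom j)"
      using prime_gt_0_int[OF p] by (metis int_dvd_int_iff int_nat_eq order_less_imp_le)
    moreover have "coprime ((4 * lam) ^ (4 * j)) p" using unit(1) by simp
    ultimately have "cong_Zp 0 (of_int (int (dwork_binom j)) / of_int ((4 * lam) ^ (4 * j))) p"
      by (rule cong_Zp_zero_fraction)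
    with False show ?thesis by simp
  qed
qed

lemma prime_cong_1_mod_4:
  fixes p :: int
  assumes "prime p" "[p = 1] (mod 4)"
  shows "4 dvd (nat p - 1)" "\<not> p dvd 4"
proof -
  have "p > 1" using prime_gt_1_int[OF assms(1)] .
  have "4 dvd p - 1" using assms(2) by (simp add: cong_iff_dvd_diff dvd_diff_commute)
  moreover have "int (nat p - 1) = p - 1" using \<open>p > 1\<close> by simp
  ultimately show "4 dvd (nat p - 1)" by (metis int_dvd_int_iff of_nat_numeral)
  show "\<not> p dvd 4"
  proof
    assume "p dvd 4"
    then have "p \<le> 4" by (simp add: zdvd_imp_le)
    with \<open>p > 1\<close> \<open>4 dvd p - 1\<close> show False by presburger
  qed
qed

theorem theorem4:
  fixes p lam :: int
  assumes "prime p" and "[p = 1] (mod 4)" and "\<not> p dvd lam"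
  shows "cong_Zp (of_int (int (dwork_count p lam) - p^2 - 1))
           (\<Sum>j\<in>{0..<nat p}. pochhammer (1/4::rat) j * pochhammer (2/4) j * pochhammer (3/4) j
               / (fact j)^3 * (inverse (of_int lam))^(4*j)) p"
proof -
  define n where "n = nat p - 1"
  have "4 dvd n" "\<not> p dvd 4 * lam"
    using prime_cong_1_mod_4[OF assms(1,2)] assms(1,3) by (simp_all add: n_def prime_dvd_mult_iff)
  let ?count = "of_int (int (dwork_count p lam) - p ^ 2 - 1) :: rat"
  let ?head = "\<lambda>j. if 4 * j \<le> n then of_int (int (dwork_binom j) * (4 * lam) ^ (n - 4 * j)) else 0"
  let ?term = "\<lambda>j. of_nat (dwork_binom j) / of_int ((4 * lam) ^ (4 * j)) :: rat"
  have "cong_Zp ?count (of_int (\<Sum>a\<le>n div 4. int (dwork_binom a) * (4 * lam) ^ (n - 4 * a))) p"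
    using dwork_count_cong[OF assms(1), of lam] \<open>4 dvd n\<close> by (intro cong_Zp_of_int) (simp add: n_def)
  also have "of_int (\<Sum>a\<le>n div 4. int (dwork_binom a) * (4 * lam) ^ (n - 4 * a)) = (\<Sum>j\<in>{0..<nat p}. ?head j)"
  proof -
    have "n div 4 < nat p" using prime_gt_1_int[OF assms(1)] div_le_dividend[of n 4] by (simp add: n_def)
    then have "{j \<in> {0..<nat p}. 4 * j \<le> n} = {..n div 4}" by auto
    then show ?thesis by (simp flip: sum.inter_filter)
  qed
  also have "cong_Zp (\<Sum>j\<in>{0..<nat p}. ?head j) (\<Sum>j\<in>{0..<nat p}. ?term j) p"
    by (intro cong_Zp_sum dwork_summand_cong[OF assms(1) n_def \<open>\<not> p dvd 4 * lam\<close>]) simp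
  also have "(\<Sum>j\<in>{0..<nat p}. ?term j) = (\<Sum>j\<in>{0..<nat p}. pochhammer (1/4::rat) j * pochhammer (2/4) j
      * pochhammer (3/4) j / (fact j)^3 * (inverse (of_int lam))^(4*j))"
    by (simp only: hypergeometric_coeff_eq)
  finally show ?thesis .
qed

end
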